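(* Let $r$ be an $\mathfrak s$-matrix on a pre-Lie algebra $(\mathfrak g,\cdot_{\mathfrak g})$. Then $(\mathfrak g^*,\ast_r)$ is a pre-Lie algebra, where $\alpha\ast_r\beta=L^*_{r^\sharp(\alpha)}\beta$ for $\alpha,\beta\in\mathfrak g^*$.
   Context: A pre-Lie algebra is a finite-dimensional vector space $\mathfrak g$ over a field of characteristic $0$ with product $\cdot$ satisfying $(x\cdot y)\cdot z-x\cdot(y\cdot z)=(y\cdot x)\cdot z-y\cdot(x\cdot z)$; $[x,y]_{\mathfrak g}=x\cdot y-y\cdot x$. Define $\langle L^*_x\alpha,y\rangle=-\langle\alpha,x\cdot y\rangle$. For $r\in\mathrm{Sym}^2(\mathfrak g)$, $r^\sharp:\mathfrak g^*\to\mathfrak g$ is $\langle r^\sharp(\alpha),\beta\rangle=r(\alpha,\beta)$. For $r=\sum_ia_i\otimes b_i$, $[r,r]=-\sum_{i,j}a_i\cdot a_j\otimes b_i\otimes b_j+\sum_{i,j}a_i\otimes b_i\cdot a_j\otimes b_j+\sum_{i,j}a_i\otimes a_j\otimes[b_i,b_j]_{\mathfrak g}$; $r$ is an $\mathfrak s$-matrix if $r\in\mathrm{Sym}^2(\mathfrak g)$ and $[r,r]=0$. *)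

theory Defs
  imports Main
begin

text \<open>A finite-dimensional vector space over a field 'k of characteristic 0 is
  represented in coordinates w.r.t. a chosen basis indexed by the finite type 'n,
  i.e. as 'n \<Rightarrow> 'k. The dual space is represented likewise, with the
  pairing below (dual basis). Tensors in g\<otimes>g and g\<otimes>g\<otimes>g are
  coefficient arrays indexed by 'n \<times> 'n and 'n \<times> 'n \<times> 'n.\<close>

type_synonym ('k, 'n) vec = "'n \<Rightarrow> 'k"

definition basis_vec :: "'n \<Rightarrow> ('k::field, 'n) vec" where
  "basis_vec i = (\<lambda>k. if k = i then 1 else 0)"

definition pairing :: "('k::field, 'n::finite) vec \<Rightarrow> ('k, 'n) vec \<Rightarrow> 'k" where
  "pairing \<alpha> x = (\<Sum>i\<in>UNIV. \<alpha> i * x i)"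

definition bilinear_prod ::
  "(('k::field, 'n) vec \<Rightarrow> ('k, 'n) vec \<Rightarrow> ('k, 'n) vec) \<Rightarrow> bool" where
  "bilinear_prod m \<longleftrightarrow>
     (\<forall>x x' y a b. m (\<lambda>i. a * x i + b * x' i) y = (\<lambda>k. a * m x y k + b * m x' y k)) \<and>
     (\<forall>x y y' a b. m x (\<lambda>i. a * y i + b * y' i) = (\<lambda>k. a * m x y k + b * m x y' k))"

definition pre_Lie ::
  "(('k::field, 'n) vec \<Rightarrow> ('k, 'n) vec \<Rightarrow> ('k, 'n) vec) \<Rightarrow> bool" where
  "pre_Lie m \<longleftrightarrow> bilinear_prod m \<and>
     (\<forall>x y z. (\<lambda>k. m (m x y) z k - m x (m y z) k) = (\<lambda>k. m (m y x) z k - m y (m x z) k))"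

definition commutator ::
  "(('k::field, 'n) vec \<Rightarrow> ('k, 'n) vec \<Rightarrow> ('k, 'n) vec) \<Rightarrow> ('k, 'n) vec \<Rightarrow> ('k, 'n) vec \<Rightarrow> ('k, 'n) vec" where
  "commutator m x y = (\<lambda>k. m x y k - m y x k)"

definition tensor3 :: "('k::field, 'n) vec \<Rightarrow> ('k, 'n) vec \<Rightarrow> ('k, 'n) vec \<Rightarrow> ('n \<times> 'n \<times> 'n \<Rightarrow> 'k)" where
  "tensor3 x y z = (\<lambda>(p, q, s). x p * y q * z s)"

text \<open>[r,r] for r = \<Sum>_{i\<in>I} a_i \<otimes> b_i, computed by the paper's formula:
  [r,r] = -\<Sum> a_i\<cdot>a_j \<otimes> b_i \<otimes> b_j + \<Sum> a_i \<otimes> b_i\<cdot>a_j \<otimes> b_j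
          + \<Sum> a_i \<otimes> a_j \<otimes> [b_i,b_j].\<close>
definition rr_bracket_decomp ::
  "(('k::field, 'n::finite) vec \<Rightarrow> ('k, 'n) vec \<Rightarrow> ('k, 'n) vec) \<Rightarrow>
   'i set \<Rightarrow> ('i \<Rightarrow> ('k, 'n) vec) \<Rightarrow> ('i \<Rightarrow> ('k, 'n) vec) \<Rightarrow> ('n \<times> 'n \<times> 'n \<Rightarrow> 'k)" where
  "rr_bracket_decomp m I a b = (\<lambda>t. \<Sum>i\<in>I. \<Sum>j\<in>I.
      - tensor3 (m (a i) (a j)) (b i) (b j) t
      + tensor3 (a i) (m (b i) (a j)) (b j) t
      + tensor3 (a i) (a j) (commutator m (b i) (b j)) t)"

text \<open>A 2-tensor r \<in> g\<otimes>g given by coefficients r(i,j), i.e.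
  r = \<Sum>_{(i,j)} r(i,j) e_i \<otimes> e_j; [r,r] computed from this decomposition.\<close>
definition rr_bracket ::
  "(('k::field, 'n::finite) vec \<Rightarrow> ('k, 'n) vec \<Rightarrow> ('k, 'n) vec) \<Rightarrow> ('n \<times> 'n \<Rightarrow> 'k) \<Rightarrow> ('n \<times> 'n \<times> 'n \<Rightarrow> 'k)" where
  "rr_bracket m r = rr_bracket_decomp m UNIV
      (\<lambda>(i, j). (\<lambda>k. r (i, j) * basis_vec i k)) (\<lambda>(i, j). basis_vec j)"

definition symmetric_tensor :: "('n \<times> 'n \<Rightarrow> 'k) \<Rightarrow> bool" where
  "symmetric_tensor r \<longleftrightarrow> (\<forall>i j. r (i, j) = r (j, i))"

definition s_matrix ::
  "(('k::field, 'n::finite) vec \<Rightarrow> ('k, 'n) vec \<Rightarrow> ('k, 'n) vec) \<Rightarrow> ('n \<times> 'n \<Rightarrow> 'k) \<Rightarrow> bool" where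
  "s_matrix m r \<longleftrightarrow> symmetric_tensor r \<and> rr_bracket m r = (\<lambda>_. 0)"

text \<open>r^\<sharp> : g^* \<rightarrow> g, \<langle>r^\<sharp>(\<alpha>), \<beta>\<rangle> = r(\<alpha>,\<beta>) = \<Sum> r(i,j) \<alpha>_i \<beta>_j.\<close>
definition r_sharp :: "('n::finite \<times> 'n \<Rightarrow> 'k::field) \<Rightarrow> ('k, 'n) vec \<Rightarrow> ('k, 'n) vec" where
  "r_sharp r \<alpha> = (\<lambda>j. \<Sum>i\<in>UNIV. \<alpha> i * r (i, j))"

text \<open>L^*_x : g^* \<rightarrow> g^*, \<langle>L^*_x \<alpha>, y\<rangle> = -\<langle>\<alpha>, x\<cdot>y\<rangle>.\<close>
definition L_star ::
  "(('k::field, 'n::finite) vec \<Rightarrow> ('k, 'n) vec \<Rightarrow> ('k, 'n) vec) \<Rightarrow> ('k, 'n) vec \<Rightarrow> ('k, 'n) vec \<Rightarrow> ('k, 'n) vec" where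
  "L_star m x \<alpha> = (\<lambda>j. - pairing \<alpha> (m x (basis_vec j)))"

definition star_r ::
  "(('k::field, 'n::finite) vec \<Rightarrow> ('k, 'n) vec \<Rightarrow> ('k, 'n) vec) \<Rightarrow> ('n \<times> 'n \<Rightarrow> 'k) \<Rightarrow>
   ('k, 'n) vec \<Rightarrow> ('k, 'n) vec \<Rightarrow> ('k, 'n) vec" where
  "star_r m r \<alpha> \<beta> = L_star m (r_sharp r \<alpha>) \<beta>"

end

theory Submission
  imports Defs
begin

text \<open>Write \<open>R = r\<^sup>\<sharp>\<close>, so that \<open>\<alpha> \<ast> \<beta> = L\<^sup>*\<^sub>R\<^sub>\<alpha> \<beta>\<close>. Contracting
  \<open>[r,r] = 0\<close> with \<open>\<beta> \<otimes> \<alpha> \<otimes> \<delta>\<close> and using the symmetry of \<open>r\<close> gives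
  \<open>\<langle>\<beta>, R\<alpha>\<cdot>R\<delta>\<rangle> = \<langle>\<alpha>, R\<beta>\<cdot>R\<delta>\<rangle> + \<langle>\<delta>, [R\<beta>, R\<alpha>]\<rangle>\<close>, which says that
  \<open>R(\<alpha>\<ast>\<beta> - \<beta>\<ast>\<alpha>) = [R\<alpha>, R\<beta>]\<close>. Since
  \<open>\<langle>(\<alpha>\<ast>\<beta>)\<ast>\<gamma> - \<alpha>\<ast>(\<beta>\<ast>\<gamma>), x\<rangle> = -\<langle>\<gamma>, R(\<alpha>\<ast>\<beta>)\<cdot>x + R\<beta>\<cdot>(R\<alpha>\<cdot>x)\<rangle>\<close>,
  left-symmetry of \<open>\<ast>\<close> then reduces to the pre-Lie identity in the form
  \<open>[u,v]\<cdot>x = u\<cdot>(v\<cdot>x) - v\<cdot>(u\<cdot>x)\<close>.\<close>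

lemma bilinear_prodD:
  assumes "bilinear_prod m"
  shows bilinear_prod_left: "m (\<lambda>i. a * x i + b * x' i) y = (\<lambda>k. a * m x y k + b * m x' y k)"
    and bilinear_prod_right: "m x (\<lambda>i. a * y i + b * y' i) = (\<lambda>k. a * m x y k + b * m x y' k)"
  using assms unfolding bilinear_prod_def by blast+

lemma bilinear_prod_left_diff:
  "bilinear_prod m \<Longrightarrow> m (\<lambda>i. x i - x' i) y = (\<lambda>k. m x y k - m x' y k)"
  using bilinear_prod_left[of m 1 x "-1" x' y] by simp

lemma bilinear_prod_left_lincomb:
  assumes "bilinear_prod m" and "finite S"
  shows "m (\<lambda>i. \<Sum>s\<in>S. c s * x s i) y = (\<lambda>k. \<Sum>s\<in>S. c s * m (x s) y k)"
  using assms(2)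
proof (induction S rule: finite_induct)
  case empty
  show ?case using bilinear_prod_left[OF assms(1), of 0 "\<lambda>_. 0" 0 "\<lambda>_. 0" y] by simp
next
  case (insert s S)
  then show ?case
    using bilinear_prod_left[OF assms(1), of "c s" "x s" 1 "\<lambda>i. \<Sum>s\<in>S. c s * x s i" y] by simp
qed

lemma bilinear_prod_right_lincomb:
  assumes "bilinear_prod m" and "finite S"
  shows "m x (\<lambda>i. \<Sum>s\<in>S. c s * y s i) = (\<lambda>k. \<Sum>s\<in>S. c s * m x (y s) k)"
  using assms(2)
proof (induction S rule: finite_induct)
  case empty
  show ?case using bilinear_prod_right[OF assms(1), of x 0 "\<lambda>_. 0" 0 "\<lambda>_. 0"] by simp
next
  case (insert s S)
  then show ?case
    using bilinear_prod_right[OF assms(1), of x "c s" "y s" 1 "\<lambda>i. \<Sum>s\<in>S. c s * y s i"] by simp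
qed

lemma bilinear_prod_commutator:
  "bilinear_prod m \<Longrightarrow> bilinear_prod (commutator m)"
  unfolding bilinear_prod_def commutator_def by (simp add: fun_eq_iff algebra_simps)

lemma pre_Lie_commutator_left:
  assumes "pre_Lie m"
  shows "m (commutator m u v) y = (\<lambda>k. m u (m v y) k - m v (m u y) k)"
proof -
  have "bilinear_prod m" and "(\<lambda>k. m (m u v) y k - m u (m v y) k) = (\<lambda>k. m (m v u) y k - m v (m u y) k)"
    using assms unfolding pre_Lie_def by blast+
  then show ?thesis
    unfolding commutator_def by (simp add: bilinear_prod_left_diff fun_eq_iff algebra_simps)
qed

lemma pairing_lincomb:
  "pairing \<gamma> (\<lambda>k. \<Sum>s\<in>S. c s * x s k) = (\<Sum>s\<in>S. c s * pairing \<gamma> (x s))"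
  unfolding pairing_def by (simp add: sum_distrib_left sum.swap[of _ UNIV] mult_ac)

lemma pairing_diff: "pairing \<gamma> (\<lambda>k. x k - y k) = pairing \<gamma> x - pairing \<gamma> y"
  unfolding pairing_def by (simp add: sum_subtractf right_diff_distrib)

lemma pairing_commute: "pairing \<alpha> x = pairing x \<alpha>"
  unfolding pairing_def by (simp add: mult.commute)

lemma pairing_basis_vec: "pairing \<alpha> (basis_vec j) = \<alpha> j"
  unfolding pairing_def basis_vec_def by (simp add: if_distrib cong: if_cong)

lemma vec_eq_lincomb_basis_vec:
  "(x :: ('k::field, 'n::finite) vec) = (\<lambda>i. \<Sum>j\<in>UNIV. x j * basis_vec j i)"
  by (rule ext) (simp add: basis_vec_def if_distrib eq_commute cong: if_cong)

lemma pairing_L_star: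
  assumes "bilinear_prod m"
  shows "pairing (L_star m x \<beta>) y = - pairing \<beta> (m x y)"
proof -
  have "pairing \<beta> (m x y) = pairing \<beta> (m x (\<lambda>i. \<Sum>j\<in>UNIV. y j * basis_vec j i))"
    by (subst vec_eq_lincomb_basis_vec) (rule refl)
  also have "\<dots> = (\<Sum>j\<in>UNIV. y j * pairing \<beta> (m x (basis_vec j)))"
    by (simp add: bilinear_prod_right_lincomb[OF assms] pairing_lincomb)
  finally show ?thesis
    unfolding L_star_def by (simp add: pairing_def sum_negf mult.commute)
qed

text \<open>For \<open>r = \<Sum>\<^sub>i a\<^sub>i \<otimes> b\<^sub>i\<close> this is \<open>\<gamma> \<mapsto> \<Sum>\<^sub>i \<langle>\<gamma>, b\<^sub>i\<rangle> a\<^sub>i\<close>,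
  so \<open>r\<^sup>\<sharp> = tensor_contract_snd I b a\<close>.\<close>

definition tensor_contract_snd ::
  "'i set \<Rightarrow> ('i \<Rightarrow> ('k::field, 'n::finite) vec) \<Rightarrow> ('i \<Rightarrow> ('k, 'n) vec) \<Rightarrow> ('k, 'n) vec \<Rightarrow> ('k, 'n) vec"
  where "tensor_contract_snd I a b \<gamma> = (\<lambda>k. \<Sum>i\<in>I. pairing \<gamma> (b i) * a i k)"

lemma pairing_bilinear_tensor_contract_snd:
  assumes "bilinear_prod m" and "finite I" and "finite J"
  shows "pairing \<gamma> (m (tensor_contract_snd I a b \<alpha>) (tensor_contract_snd J c d \<delta>))
    = (\<Sum>i\<in>I. \<Sum>j\<in>J. pairing \<alpha> (b i) * pairing \<delta> (d j) * pairing \<gamma> (m (a i) (c j)))"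
  unfolding tensor_contract_snd_def
  by (simp only: bilinear_prod_left_lincomb[OF assms(1,2)] bilinear_prod_right_lincomb[OF assms(1,3)]
      pairing_lincomb) (simp add: sum_distrib_left mult_ac)

lemma sum_tensor3:
  "(\<Sum>p\<in>UNIV. \<Sum>q\<in>UNIV. \<Sum>s\<in>UNIV. \<beta> p * \<alpha> q * \<delta> s * tensor3 x y z (p, q, s))
    = pairing \<beta> x * pairing \<alpha> y * pairing (\<delta> :: ('k::field, 'n::finite) vec) z"
  unfolding pairing_def tensor3_def
  by (simp add: sum_distrib_left sum_distrib_right mult_ac)

lemma rr_bracket_decomp_contract:
  assumes "bilinear_prod m" and "finite I"
  shows "(\<Sum>p\<in>UNIV. \<Sum>q\<in>UNIV. \<Sum>s\<in>UNIV. \<beta> p * \<alpha> q * \<delta> s * rr_bracket_decomp m I a b (p, q, s))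
    = pairing \<alpha> (m (tensor_contract_snd I b a \<beta>) (tensor_contract_snd I a b \<delta>))
      + pairing \<delta> (commutator m (tensor_contract_snd I b a \<beta>) (tensor_contract_snd I b a \<alpha>))
      - pairing \<beta> (m (tensor_contract_snd I a b \<alpha>) (tensor_contract_snd I a b \<delta>))"
proof -
  have "(\<Sum>p\<in>UNIV. \<Sum>q\<in>UNIV. \<Sum>s\<in>UNIV. \<beta> p * \<alpha> q * \<delta> s * rr_bracket_decomp m I a b (p, q, s))
    = (\<Sum>i\<in>I. \<Sum>j\<in>I. \<Sum>p\<in>UNIV. \<Sum>q\<in>UNIV. \<Sum>s\<in>UNIV. \<beta> p * \<alpha> q * \<delta> s *
        (- tensor3 (m (a i) (a j)) (b i) (b j) (p, q, s) + tensor3 (a i) (m (b i) (a j)) (b j) (p, q, s)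
         + tensor3 (a i) (a j) (commutator m (b i) (b j)) (p, q, s)))"
    unfolding rr_bracket_decomp_def by (simp add: sum_distrib_left sum.swap[of _ UNIV I])
  also have "\<dots> = (\<Sum>i\<in>I. \<Sum>j\<in>I. pairing \<beta> (a i) * pairing \<delta> (b j) * pairing \<alpha> (m (b i) (a j)))
        + (\<Sum>i\<in>I. \<Sum>j\<in>I. pairing \<beta> (a i) * pairing \<alpha> (a j) * pairing \<delta> (commutator m (b i) (b j)))
        - (\<Sum>i\<in>I. \<Sum>j\<in>I. pairing \<alpha> (b i) * pairing \<delta> (b j) * pairing \<beta> (m (a i) (a j)))"
    by (simp only: distrib_left mult_minus_right sum.distrib sum_negf sum_tensor3) (simp add: algebra_simps)
  finally show ?thesis
    using assms by (simp only: pairing_bilinear_tensor_contract_snd bilinear_prod_commutator)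
qed

lemma sum_UNIV_prod:
  "(\<Sum>x\<in>UNIV. f x) = (\<Sum>i\<in>UNIV. \<Sum>j\<in>UNIV. f (i :: 'a::finite, j :: 'b::finite))"
  by (simp add: sum.cartesian_product)

lemma r_sharp_eq_tensor_contract_snd:
  fixes r :: "'n::finite \<times> 'n \<Rightarrow> 'k::field"
  shows "r_sharp r = tensor_contract_snd UNIV (\<lambda>(i, j). basis_vec j) (\<lambda>(i, j) k. r (i, j) * basis_vec i k)"
    (is "_ = ?C")
proof (intro ext)
  fix \<gamma> :: "('k, 'n) vec" and k
  have "?C \<gamma> k = (\<Sum>i\<in>UNIV. \<Sum>j\<in>UNIV. \<gamma> i * r (i, j) * basis_vec j k)"
    unfolding tensor_contract_snd_def
    by (simp add: sum_UNIV_prod pairing_commute[of \<gamma>] pairing_def basis_vec_def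
        if_distrib cong: if_cong)
  then show "r_sharp r \<gamma> k = ?C \<gamma> k"
    unfolding r_sharp_def by (simp add: basis_vec_def if_distrib cong: if_cong)
qed

lemma r_sharp_eq_tensor_contract_snd_transpose:
  fixes r :: "'n::finite \<times> 'n \<Rightarrow> 'k::field"
  assumes "symmetric_tensor r"
  shows "r_sharp r = tensor_contract_snd UNIV (\<lambda>(i, j) k. r (i, j) * basis_vec i k) (\<lambda>(i, j). basis_vec j)"
    (is "_ = ?C")
proof (intro ext)
  fix \<gamma> :: "('k, 'n) vec" and k
  have "?C \<gamma> k = (\<Sum>i\<in>UNIV. \<Sum>j\<in>UNIV. \<gamma> j * r (i, j) * basis_vec i k)"
    unfolding tensor_contract_snd_def by (simp add: sum_UNIV_prod pairing_basis_vec mult.assoc)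
  also have "\<dots> = (\<Sum>j\<in>UNIV. \<Sum>i\<in>UNIV. \<gamma> j * r (i, j) * basis_vec i k)"
    by (rule sum.swap)
  also have "\<dots> = (\<Sum>j\<in>UNIV. \<gamma> j * r (k, j))"
    by (simp add: basis_vec_def if_distrib cong: if_cong)
  finally have "?C \<gamma> k = (\<Sum>j\<in>UNIV. \<gamma> j * r (k, j))" .
  with assms show "r_sharp r \<gamma> k = ?C \<gamma> k"
    unfolding r_sharp_def symmetric_tensor_def by simp
qed

lemma s_matrix_pairing_identity:
  assumes "bilinear_prod m" and "s_matrix m r"
  shows "pairing \<beta> (m (r_sharp r \<alpha>) (r_sharp r \<delta>))
    = pairing \<alpha> (m (r_sharp r \<beta>) (r_sharp r \<delta>)) + pairing \<delta> (commutator m (r_sharp r \<beta>) (r_sharp r \<alpha>))"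
proof -
  have sym: "symmetric_tensor r" and "rr_bracket m r = (\<lambda>_. 0)"
    using assms(2) unfolding s_matrix_def by blast+
  then have "0 = (\<Sum>p\<in>UNIV. \<Sum>q\<in>UNIV. \<Sum>s\<in>UNIV. \<beta> p * \<alpha> q * \<delta> s * rr_bracket m r (p, q, s))"
    by simp
  also have "\<dots> = pairing \<alpha> (m (r_sharp r \<beta>) (r_sharp r \<delta>))
      + pairing \<delta> (commutator m (r_sharp r \<beta>) (r_sharp r \<alpha>)) - pairing \<beta> (m (r_sharp r \<alpha>) (r_sharp r \<delta>))"
    unfolding rr_bracket_def rr_bracket_decomp_contract[OF assms(1) finite_UNIV]
    by (simp only: r_sharp_eq_tensor_contract_snd[symmetric] r_sharp_eq_tensor_contract_snd_transpose[OF sym, symmetric])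
  finally show ?thesis by (simp add: algebra_simps)
qed

lemma r_sharp_linear:
  "r_sharp r (\<lambda>i. a * x i + b * y i) = (\<lambda>j. a * r_sharp r x j + b * r_sharp r y j)"
  unfolding r_sharp_def by (simp add: sum.distrib sum_distrib_left algebra_simps)

lemma r_sharp_diff: "r_sharp r (\<lambda>i. x i - y i) = (\<lambda>j. r_sharp r x j - r_sharp r y j)"
  using r_sharp_linear[of r 1 x "-1" y] by simp

lemma pairing_r_sharp_commute:
  assumes "symmetric_tensor r"
  shows "pairing \<delta> (r_sharp r \<alpha>) = pairing \<alpha> (r_sharp r \<delta>)"
proof -
  have "pairing \<delta> (r_sharp r \<alpha>) = (\<Sum>j\<in>UNIV. \<Sum>i\<in>UNIV. \<delta> j * \<alpha> i * r (i, j))"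
    unfolding pairing_def r_sharp_def by (simp add: sum_distrib_left mult_ac)
  also have "\<dots> = (\<Sum>i\<in>UNIV. \<Sum>j\<in>UNIV. \<alpha> i * \<delta> j * r (j, i))"
    using assms unfolding symmetric_tensor_def by (subst sum.swap) (simp add: mult_ac)
  also have "\<dots> = pairing \<alpha> (r_sharp r \<delta>)"
    unfolding pairing_def r_sharp_def by (simp add: sum_distrib_left mult_ac)
  finally show ?thesis .
qed

lemma bilinear_prod_star_r:
  assumes "bilinear_prod m"
  shows "bilinear_prod (star_r m r)"
  unfolding bilinear_prod_def star_r_def L_star_def r_sharp_linear
  by (simp add: bilinear_prod_left[OF assms] pairing_def sum.distrib sum_distrib_left fun_eq_iff
      algebra_simps)

lemma r_sharp_commutator_star_r:
  assumes "bilinear_prod m" and "s_matrix m r"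
  shows "r_sharp r (commutator (star_r m r) \<alpha> \<beta>) = commutator m (r_sharp r \<alpha>) (r_sharp r \<beta>)"
    (is "?L = ?R")
proof
  fix k
  define R where "R = r_sharp r"
  have sym: "symmetric_tensor r" using assms(2) unfolding s_matrix_def by blast
  have component: "R \<gamma> k = pairing \<gamma> (R (basis_vec k))" for \<gamma>
    using pairing_r_sharp_commute[OF sym, of "basis_vec k" \<gamma>]
    unfolding R_def by (simp add: pairing_commute[of "basis_vec k"] pairing_basis_vec)
  have star: "pairing (star_r m r \<gamma> \<epsilon>) y = - pairing \<epsilon> (m (R \<gamma>) y)" for \<gamma> \<epsilon> y
    unfolding star_r_def R_def by (rule pairing_L_star[OF assms(1)])
  have "R (commutator (star_r m r) \<alpha> \<beta>) k
      = pairing \<alpha> (m (R \<beta>) (R (basis_vec k))) - pairing \<beta> (m (R \<alpha>) (R (basis_vec k)))"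
    unfolding commutator_def R_def r_sharp_diff
    by (simp add: component[unfolded R_def] star[unfolded R_def])
  also have "\<dots> = - pairing (basis_vec k) (commutator m (R \<beta>) (R \<alpha>))"
    using s_matrix_pairing_identity[OF assms, of \<beta> \<alpha> "basis_vec k"] unfolding R_def by simp
  also have "\<dots> = commutator m (R \<alpha>) (R \<beta>) k"
    by (simp add: pairing_commute[of "basis_vec k"] pairing_basis_vec commutator_def)
  finally show "?L k = ?R k"
    unfolding R_def .
qed

lemma star_r_left_symmetric:
  fixes m :: "('k::field, 'n::finite) vec \<Rightarrow> ('k, 'n) vec \<Rightarrow> ('k, 'n) vec"
  assumes "pre_Lie m" and "s_matrix m r"
  shows "(\<lambda>k. star_r m r (star_r m r x y) z k - star_r m r x (star_r m r y z) k)
       = (\<lambda>k. star_r m r (star_r m r y x) z k - star_r m r y (star_r m r x z) k)"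
proof
  fix k
  define S where "S = star_r m r"
  define R where "R = r_sharp r"
  define w :: "('k, 'n) vec" where "w = basis_vec k"
  have bil: "bilinear_prod m" using assms(1) unfolding pre_Lie_def by blast
  have component: "S u \<beta> k = - pairing \<beta> (m (R u) w)" for u \<beta>
    unfolding S_def R_def w_def star_r_def L_star_def ..
  have associator: "S (S u v) z k - S u (S v z) k
      = - pairing z (m (R (S u v)) w) - pairing z (m (R v) (m (R u) w))" for u v
    using pairing_L_star[OF bil, of "R v" z "m (R u) w"]
    unfolding component unfolding S_def R_def star_r_def by simp
  have "(\<lambda>j. m (R (S x y)) w j - m (R (S y x)) w j) = m (R (commutator S x y)) w"
    unfolding commutator_def R_def r_sharp_diff by (simp add: bilinear_prod_left_diff[OF bil])
  also have "\<dots> = (\<lambda>j. m (R x) (m (R y) w) j - m (R y) (m (R x) w) j)"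
    unfolding S_def R_def r_sharp_commutator_star_r[OF bil assms(2)] pre_Lie_commutator_left[OF assms(1)] ..
  finally have "pairing z (m (R (S x y)) w) - pairing z (m (R (S y x)) w)
      = pairing z (m (R x) (m (R y) w)) - pairing z (m (R y) (m (R x) w))"
    by (metis pairing_diff)
  then show "S (S x y) z k - S x (S y z) k = S (S y x) z k - S y (S x z) k"
    unfolding associator by (simp add: algebra_simps)
qed

theorem proposition4p2:
  fixes m :: "('k::field_char_0, 'n::finite) vec \<Rightarrow> ('k, 'n) vec \<Rightarrow> ('k, 'n) vec"
    and r :: "'n \<times> 'n \<Rightarrow> 'k"
  assumes "pre_Lie m"
    and "s_matrix m r"
  shows "pre_Lie (star_r m r)"
  using assms bilinear_prod_star_r star_r_left_symmetric unfolding pre_Lie_def by blast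

end
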